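(* Let $\beta,\kappa>0$, let $V$ be as in the context, and set $\widetilde h(r):=r^{-(d-2)/2}K_{(d-2)/(2\beta)}\big(\frac{\sqrt\kappa}{\beta r^\beta}\big)$ for $r>0$. (i) Suppose there exist $\beta'\in(0,\beta)$ and $C_1>0$ with $V(x)\ge\kappa|x|^{-2-2\beta}-C_1|x|^{-2-\beta'}$ for all $0<|x|\le1$, and let $u_1(r):=(2-r^{(\beta-\beta')/2})\widetilde h(r)$. Then (a) $\widetilde h(|x|)\le u_1(|x|)\le2\widetilde h(|x|)$ for all $x\in\mathbb{R}^d_0$ with $|x|\le1$; and (b) there exists $R_1\in(0,1]$ such that $(\Delta-V)(u_1(|\cdot|))(x)\le0$ for all $x\in\mathbb{R}^d_0$ with $|x|\le R_1$. (ii) Suppose there exist $\beta'\in(0,\beta)$ and $C_2>0$ with $V(x)\le\kappa|x|^{-2-2\beta}+C_2|x|^{-2-\beta'}$ for all $0<|x|\le1$, and let $u_2(r):=(1+r^{(\beta-\beta')/2})\widetilde h(r)$. Then (a) $\widetilde h(|x|)\le u_2(|x|)\le2\widetilde h(|x|)$ for all $x\in\mathbb{R}^d_0$ with $|x|\le1$; and (b) there exists $R_2\in(0,1]$ such that $(\Delta-V)(u_2(|\cdot|))(x)\ge0$ for all $x\in\mathbb{R}^d_0$ with $|x|\le R_2$.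
   Context: $d\ge1$, $\mathbb{R}^d_0:=\mathbb{R}^d\setminus\{0\}$; $V$ is a non-negative locally bounded Borel function on $\mathbb{R}^d_0$ with $\sup_{|x|\ge1}V(x)<\infty$ and $\int_{B(0,1)\setminus\{0\}}V(x)dx=\infty$. $K_\nu$ denotes the modified Bessel function of the second kind of order $\nu$. $\Delta$ is the Laplacian, applied classically to the smooth function $x\mapsto u(|x|)$ on $\mathbb{R}^d_0$. *)

theory Defs
  imports "HOL-Analysis.Analysis"
begin

text \<open>Modified Bessel function of the second kind, via the standard integral
representation  K_nu(z) = int_0^infty exp(-z cosh t) cosh(nu t) dt  (z > 0).\<close>
definition besselK :: "real \<Rightarrow> real \<Rightarrow> real" where
  "besselK \<nu> z = (LBINT t:{0..}. exp (- z * cosh t) * cosh (\<nu> * t))"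

definition laplacian :: "('a::euclidean_space \<Rightarrow> real) \<Rightarrow> 'a \<Rightarrow> real" where
  "laplacian f x = (\<Sum>b\<in>Basis. deriv (\<lambda>s. deriv (\<lambda>t. f (x + t *\<^sub>R b)) s) 0)"

definition htilde :: "nat \<Rightarrow> real \<Rightarrow> real \<Rightarrow> real \<Rightarrow> real" where
  "htilde d \<beta> \<kappa> r =
     r powr (- (real d - 2) / 2) * besselK ((real d - 2) / (2 * \<beta>)) (sqrt \<kappa> / (\<beta> * r powr \<beta>))"

text \<open>Standing assumptions on the potential V (values at 0 are irrelevant).\<close>
definition admissible_potential :: "('a::euclidean_space \<Rightarrow> real) \<Rightarrow> bool" where
  "admissible_potential V \<longleftrightarrow>
     (\<forall>x. x \<noteq> 0 \<longrightarrow> V x \<ge> 0) \<and>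
     V \<in> borel_measurable borel \<and>
     (\<forall>K. compact K \<and> K \<subseteq> - {0} \<longrightarrow> bounded (V ` K)) \<and>
     (\<exists>M. \<forall>x. norm x \<ge> 1 \<longrightarrow> V x \<le> M) \<and>
     (\<integral>\<^sup>+ x. ennreal (V x) * indicator (ball 0 1 - {0}) x \<partial>lborel) = \<infinity>"

end

theory Submission
  imports Defs
begin

text \<open>With \<open>K\<^sub>\<nu>\<close> defined by its integral representation, differentiation under the integral
  sign and an integration by parts yield the modified Bessel equation; the substitution
  \<open>s = \<surd>\<kappa> / (\<beta> r^\<beta>)\<close> turns it into the radial equation
  \<open>h'' + (d - 1)/r h' = \<kappa> r^(-2-2\<beta>) h\<close> for \<open>h = htilde\<close>.
  For \<open>u = (c + \<sigma> r^\<gamma>) h\<close> with \<open>\<gamma> = (\<beta> - \<beta>')/2\<close> and \<open>\<sigma> = \<mp>1\<close>, the product rule and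
  \<open>-K\<^sub>\<nu>' \<ge> K\<^sub>\<nu>\<close> give \<open>\<sigma> (\<Delta> - V) u \<ge> \<sigma> (\<kappa> r^(-2-2\<beta>) - V) u + 2 \<gamma> \<beta> s r^(\<gamma>-2) h\<close>.
  The last term is of order \<open>r^(-2-\<beta>'-\<gamma>) h\<close>, so near the origin it dominates the error
  \<open>C r^(-2-\<beta>') u\<close> allowed by the hypothesis on \<open>V\<close>.\<close>

section \<open>The integral representation of \<open>K\<^sub>\<nu>\<close>\<close>

definition besselK_integrand :: "real \<Rightarrow> nat \<Rightarrow> real \<Rightarrow> real \<Rightarrow> real" where
  "besselK_integrand \<nu> k s t = cosh t ^ k * exp (- s * cosh t) * cosh (\<nu> * t)"

text \<open>\<open>besselK_moment \<nu> k s\<close> is \<open>(-1)\<^sup>k\<close> times the \<open>k\<close>-th derivative of \<open>K\<^sub>\<nu>\<close> at \<open>s\<close>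
  (see \<open>has_real_derivative_besselK_moment\<close>).\<close>
definition besselK_moment :: "real \<Rightarrow> nat \<Rightarrow> real \<Rightarrow> real" where
  "besselK_moment \<nu> k s = (LBINT t:{0..}. besselK_integrand \<nu> k s t)"

lemma besselK_moment_0: "besselK_moment \<nu> 0 s = besselK \<nu> s"
  by (simp add: besselK_moment_def besselK_integrand_def besselK_def)

lemma cosh_le_exp_abs: "cosh (x::real) \<le> exp \<bar>x\<bar>"
  unfolding cosh_def by (cases "x \<ge> 0") auto

lemma abs_sinh_le_cosh: "\<bar>sinh (x::real)\<bar> \<le> cosh x"
  using sinh_le_cosh_real[of "\<bar>x\<bar>"] by (simp add: sinh_real_abs)

lemma square_div_8_le_cosh: "(t::real)^2 / 8 \<le> cosh t"
proof -
  have "t^2 / 4 \<le> (1 + \<bar>t\<bar>/2)^2" by (simp add: power2_eq_square field_simps)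
  also have "\<dots> \<le> exp (\<bar>t\<bar>/2) ^ 2" by (intro power_mono exp_ge_add_one_self) auto
  also have "\<dots> = exp \<bar>t\<bar>" by (simp flip: exp_of_nat_mult)
  also have "\<dots> \<le> exp t + exp (-t)" by (cases "t \<ge> 0") auto
  finally show ?thesis unfolding cosh_def by simp
qed

lemma exp_taylor_remainder_le: "\<bar>exp (y::real) - 1 - y\<bar> \<le> y^2 * exp \<bar>y\<bar>"
proof -
  obtain t where t: "\<bar>t\<bar> \<le> \<bar>y\<bar>" "exp y = (\<Sum>m<2. y ^ m / fact m) + exp t / fact 2 * y ^ 2"
    using Maclaurin_exp_le[of y 2] by blast
  then have "\<bar>exp y - 1 - y\<bar> = exp t / 2 * y^2" by (simp add: eval_nat_numeral)
  also have "\<dots> \<le> exp \<bar>y\<bar> * y^2"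
    using exp_le_cancel_iff[of t "\<bar>y\<bar>"] t(1) exp_gt_zero[of t]
    by (intro mult_right_mono) (linarith, simp)
  finally show ?thesis by (simp only: mult.commute)
qed

lemma besselK_integrand_nonneg: "besselK_integrand \<nu> k s t \<ge> 0"
  by (simp add: besselK_integrand_def)

lemma besselK_integrand_mono: "besselK_integrand \<nu> k s t \<le> besselK_integrand \<nu> (Suc k) s t"
  using cosh_real_ge_1[of t] by (simp add: besselK_integrand_def)

text \<open>The Gaussian lower bound \<open>cosh t \<ge> t\<^sup>2/8\<close> beats the exponential growth of the other factors.\<close>
lemma besselK_integrand_le_exp:
  assumes "s > 0" "t \<ge> 0"
  shows "besselK_integrand \<nu> k s t \<le> exp (2 * (k + \<bar>\<nu>\<bar> + 1)^2 / s) * exp (- t)"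
proof -
  define m where "m = k + \<bar>\<nu>\<bar> + 1"
  have "cosh t ^ k \<le> exp t ^ k" using cosh_le_exp_abs[of t] assms by (intro power_mono) auto
  then have "cosh t ^ k \<le> exp (k * t)" by (simp add: exp_of_nat_mult)
  moreover have "cosh (\<nu> * t) \<le> exp (\<bar>\<nu>\<bar> * t)" using cosh_le_exp_abs[of "\<nu>*t"] assms by (simp add: abs_mult)
  moreover have "exp (- s * cosh t) \<le> exp (- s * (t^2/8))" using square_div_8_le_cosh[of t] assms by simp
  ultimately have "besselK_integrand \<nu> k s t \<le> exp (k * t) * exp (- s * (t^2/8)) * exp (\<bar>\<nu>\<bar> * t)"
    unfolding besselK_integrand_def by (intro mult_mono) auto
  also have "\<dots> = exp (m * t - s * t^2 / 8) * exp (- t)"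
    by (simp add: m_def algebra_simps flip: exp_add)
  also have "\<dots> \<le> exp (2 * m^2 / s) * exp (- t)"
  proof -
    have "0 \<le> (s/8) * (t - 4*m/s)^2" using assms by simp
    also have "\<dots> = s*t^2/8 - m*t + 2*m^2/s" using assms by (simp add: power2_eq_square field_simps)
    finally show ?thesis by simp
  qed
  finally show ?thesis by (simp add: m_def)
qed

lemma set_integrable_exp_minus: "set_integrable lborel {0..} (\<lambda>t::real. exp (- t))"
proof -
  have "integrable lebesgue (\<lambda>t::real. indicat_real {0..} t *\<^sub>R exp (- 1 * t))"
    by (intro nonnegative_absolutely_integrable_1 [unfolded set_integrable_def]
        integrable_on_exp_minus_to_infinity) auto
  then show ?thesis unfolding set_integrable_def by (subst (asm) integrable_completion) auto
qed

lemma set_integrable_besselK_integrand: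
  assumes "s > 0"
  shows "set_integrable lborel {0..} (besselK_integrand \<nu> k s)"
  unfolding set_integrable_def
proof (rule Bochner_Integration.integrable_bound)
  show "integrable lborel (\<lambda>t. indicat_real {0..} t *\<^sub>R (exp (2 * (k + \<bar>\<nu>\<bar> + 1)^2 / s) * exp (- t)))"
    using set_integrable_mult_right[OF set_integrable_exp_minus] unfolding set_integrable_def .
  show "(\<lambda>t. indicat_real {0..} t *\<^sub>R besselK_integrand \<nu> k s t) \<in> borel_measurable lborel"
    unfolding besselK_integrand_def measurable_lborel2
    by (intro borel_measurable_continuous_on_indicator continuous_intros) auto
  show "AE t in lborel. norm (indicat_real {0..} t *\<^sub>R besselK_integrand \<nu> k s t)
      \<le> norm (indicat_real {0..} t *\<^sub>R (exp (2 * (k + \<bar>\<nu>\<bar> + 1)^2 / s) * exp (- t)))"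
    using besselK_integrand_le_exp[OF assms] besselK_integrand_nonneg by (auto simp: indicator_def)
qed

lemma besselK_moment_nonneg: "besselK_moment \<nu> k s \<ge> 0"
  unfolding besselK_moment_def set_lebesgue_integral_def
  by (intro Bochner_Integration.integral_nonneg) (simp add: besselK_integrand_nonneg)

lemma besselK_moment_mono:
  "s > 0 \<Longrightarrow> besselK_moment \<nu> k s \<le> besselK_moment \<nu> (Suc k) s"
  unfolding besselK_moment_def
  by (intro set_integral_mono set_integrable_besselK_integrand besselK_integrand_mono)

lemma besselK_integrand_taylor_bound:
  assumes "s > 0" "\<bar>h\<bar> \<le> s/2"
  shows "\<bar>besselK_integrand \<nu> k (s+h) t - besselK_integrand \<nu> k s t + h * besselK_integrand \<nu> (Suc k) s t\<bar>
           \<le> h^2 * besselK_integrand \<nu> (k+2) (s/2) t"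
proof -
  define c where "c = cosh t"
  define A where "A = c^k * cosh (\<nu>*t) * exp (- s * c)"
  have c: "c \<ge> 1" using cosh_real_ge_1 by (simp add: c_def)
  have A: "A \<ge> 0" by (simp add: A_def c_def)
  have "besselK_integrand \<nu> k (s+h) t - besselK_integrand \<nu> k s t + h * besselK_integrand \<nu> (Suc k) s t
      = A * (exp (- h * c) - 1 - (- h * c))"
    by (simp add: besselK_integrand_def A_def c_def algebra_simps flip: exp_add)
  then have "\<bar>besselK_integrand \<nu> k (s+h) t - besselK_integrand \<nu> k s t + h * besselK_integrand \<nu> (Suc k) s t\<bar>
      = A * \<bar>exp (- h * c) - 1 - (- h * c)\<bar>"
    using A by (simp add: abs_mult)
  also have "\<dots> \<le> A * ((h*c)^2 * exp (\<bar>h\<bar> * c))"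
    using exp_taylor_remainder_le[of "-h*c"] c A by (intro mult_left_mono) (simp_all add: abs_mult)
  also have "\<dots> = h^2 * (c^(k+2) * cosh (\<nu>*t) * exp (-(s - \<bar>h\<bar>) * c))"
    by (simp add: A_def power2_eq_square algebra_simps flip: exp_add)
  also have "\<dots> \<le> h^2 * (c^(k+2) * cosh (\<nu>*t) * exp (-(s/2) * c))"
  proof -
    have "(\<bar>h\<bar> - s) * c \<le> (- s/2) * c" using c assms by (intro mult_right_mono) auto
    then show ?thesis using c by (intro mult_left_mono) auto
  qed
  also have "\<dots> = h^2 * besselK_integrand \<nu> (k+2) (s/2) t"
    by (simp add: besselK_integrand_def c_def)
  finally show ?thesis .
qed

lemma besselK_moment_taylor_bound:
  assumes "s > 0" "\<bar>h\<bar> \<le> s/2"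
  shows "\<bar>besselK_moment \<nu> k (s+h) - besselK_moment \<nu> k s + h * besselK_moment \<nu> (Suc k) s\<bar>
           \<le> h^2 * besselK_moment \<nu> (k+2) (s/2)"
proof -
  define D where "D t = besselK_integrand \<nu> k (s+h) t - besselK_integrand \<nu> k s t
                          + h * besselK_integrand \<nu> (Suc k) s t" for t
  have s': "s + h > 0" "s/2 > 0" using assms by auto
  note integrable = set_integrable_besselK_integrand[OF s'(1)] set_integrable_besselK_integrand[OF assms(1)]
    set_integrable_besselK_integrand[OF s'(2)]
  have D_integrable: "set_integrable lborel {0..} D"
    unfolding D_def by (intro set_integral_add set_integral_diff set_integrable_mult_right integrable)
  have "besselK_moment \<nu> k (s+h) - besselK_moment \<nu> k s + h * besselK_moment \<nu> (Suc k) s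
      = (LBINT t:{0..}. D t)"
    unfolding D_def besselK_moment_def
    by (simp add: set_integral_add set_integral_diff set_integrable_mult_right integrable)
  also have "\<bar>\<dots>\<bar> \<le> (LBINT t:{0..}. \<bar>D t\<bar>)"
    using set_integral_norm_bound[OF D_integrable] by simp
  also have "\<dots> \<le> (LBINT t:{0..}. h^2 * besselK_integrand \<nu> (k+2) (s/2) t)"
    using D_integrable integrable besselK_integrand_taylor_bound[OF assms]
    by (intro set_integral_mono set_integrable_mult_right set_integrable_abs) (auto simp: D_def)
  also have "\<dots> = h^2 * besselK_moment \<nu> (k+2) (s/2)"
    by (simp add: besselK_moment_def)
  finally show ?thesis .
qed

lemma has_real_derivative_besselK_moment:
  assumes "s > 0"
  shows "(besselK_moment \<nu> k has_real_derivative - besselK_moment \<nu> (Suc k) s) (at s)"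
proof -
  define M where "M = besselK_moment \<nu> (k+2) (s/2)"
  have "((\<lambda>h. (besselK_moment \<nu> k (s+h) - besselK_moment \<nu> k s) / h
              - (- besselK_moment \<nu> (Suc k) s)) \<longlongrightarrow> 0) (at 0)"
  proof (rule Lim_null_comparison)
    show "((\<lambda>h. \<bar>h\<bar> * M) \<longlongrightarrow> 0) (at 0)"
      by (auto intro!: tendsto_eq_intros)
    have "norm ((besselK_moment \<nu> k (s+h) - besselK_moment \<nu> k s) / h - (- besselK_moment \<nu> (Suc k) s))
        \<le> \<bar>h\<bar> * M" if "h \<noteq> 0" "\<bar>h\<bar> < s/2" for h
    proof -
      have "norm ((besselK_moment \<nu> k (s+h) - besselK_moment \<nu> k s) / h - (- besselK_moment \<nu> (Suc k) s))
          = \<bar>besselK_moment \<nu> k (s+h) - besselK_moment \<nu> k s + h * besselK_moment \<nu> (Suc k) s\<bar> / \<bar>h\<bar>"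
        using that by (simp add: field_simps abs_divide)
      also have "\<dots> \<le> h^2 * M / \<bar>h\<bar>"
        using besselK_moment_taylor_bound[OF assms, of h \<nu> k] that by (simp add: M_def divide_right_mono)
      also have "\<dots> = \<bar>h\<bar> * M" using that by (simp add: power2_eq_square field_simps)
      finally show ?thesis .
    qed
    then show "eventually (\<lambda>h. norm ((besselK_moment \<nu> k (s+h) - besselK_moment \<nu> k s) / h
                  - (- besselK_moment \<nu> (Suc k) s)) \<le> \<bar>h\<bar> * M) (at 0)"
      unfolding eventually_at using assms by (intro exI[of _ "s/2"]) (auto simp: dist_real_def)
  qed
  then show ?thesis
    unfolding DERIV_def by (rule LIM_zero_cancel)
qed

lemma has_real_derivative_besselK_ode_primitive:
  fixes s \<nu> t :: real
  shows
  "((\<lambda>t. - s * sinh t * exp (- s * cosh t) * cosh (\<nu> * t) - \<nu> * exp (- s * cosh t) * sinh (\<nu> * t))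
     has_real_derivative
       s^2 * (besselK_integrand \<nu> 2 s t - besselK_integrand \<nu> 0 s t)
       - s * besselK_integrand \<nu> 1 s t - \<nu>^2 * besselK_integrand \<nu> 0 s t) (at t)"
  by (rule derivative_eq_intros refl | simp)+
     (simp only: besselK_integrand_def cosh_square_eq power_one_right power_0,
      simp add: algebra_simps power2_eq_square)

lemma besselK_ode_primitive_tendsto_0:
  fixes s \<nu> :: real
  assumes "s > 0"
  shows "((\<lambda>t. - s * sinh t * exp (- s * cosh t) * cosh (\<nu> * t) - \<nu> * exp (- s * cosh t) * sinh (\<nu> * t))
           \<longlongrightarrow> 0) at_top"
proof (rule Lim_null_comparison)
  define K where "K = s * exp (2 * (1 + \<bar>\<nu>\<bar> + 1)^2 / s) + \<bar>\<nu>\<bar> * exp (2 * (0 + \<bar>\<nu>\<bar> + 1)^2 / s)"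
  show "((\<lambda>t. K * exp (- t)) \<longlongrightarrow> 0) at_top"
    by real_asymp
  show "\<forall>\<^sub>F t in at_top. norm (- s * sinh t * exp (- s * cosh t) * cosh (\<nu> * t)
                             - \<nu> * exp (- s * cosh t) * sinh (\<nu> * t)) \<le> K * exp (- t)"
    using eventually_ge_at_top[of 0]
  proof eventually_elim
    case (elim t)
    have "norm (- s * sinh t * exp (- s * cosh t) * cosh (\<nu> * t) - \<nu> * exp (- s * cosh t) * sinh (\<nu> * t))
        \<le> \<bar>- s * sinh t * exp (- s * cosh t) * cosh (\<nu> * t)\<bar> + \<bar>\<nu> * exp (- s * cosh t) * sinh (\<nu> * t)\<bar>"
      by (simp only: real_norm_def abs_triangle_ineq4)
    also have "\<dots> = s * (\<bar>sinh t\<bar> * exp (- s * cosh t) * cosh (\<nu> * t))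
                      + \<bar>\<nu>\<bar> * (exp (- s * cosh t) * \<bar>sinh (\<nu> * t)\<bar>)"
      using assms by (simp add: abs_mult)
    also have "\<dots> \<le> s * besselK_integrand \<nu> 1 s t + \<bar>\<nu>\<bar> * besselK_integrand \<nu> 0 s t"
      unfolding besselK_integrand_def using assms abs_sinh_le_cosh
      by (intro add_mono mult_left_mono mult_right_mono) auto
    also have "\<dots> \<le> K * exp (- t)"
      using besselK_integrand_le_exp[OF assms elim, of \<nu> 1] besselK_integrand_le_exp[OF assms elim, of \<nu> 0] assms
      unfolding K_def distrib_right mult.assoc by (intro add_mono mult_left_mono) auto
    finally show ?case .
  qed
qed

text \<open>The modified Bessel equation \<open>s\<^sup>2 K'' + s K' - (s\<^sup>2 + \<nu>\<^sup>2) K = 0\<close>: its left-hand side is the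
  integral of an exact derivative whose primitive vanishes at \<open>0\<close> and at \<open>\<infinity>\<close>.\<close>
lemma besselK_moment_ode:
  assumes s: "s > 0"
  shows "s^2 * (besselK_moment \<nu> 2 s - besselK_moment \<nu> 0 s) - s * besselK_moment \<nu> 1 s
           - \<nu>^2 * besselK_moment \<nu> 0 s = 0"
proof -
  define f where "f t = s^2 * (besselK_integrand \<nu> 2 s t - besselK_integrand \<nu> 0 s t)
                  - s * besselK_integrand \<nu> 1 s t - \<nu>^2 * besselK_integrand \<nu> 0 s t" for t
  define F where "F t = - s * sinh t * exp (- s * cosh t) * cosh (\<nu> * t) - \<nu> * exp (- s * cosh t) * sinh (\<nu> * t)" for t
  note integrable = set_integrable_besselK_integrand[OF s]
  have f_integrable: "set_integrable lborel {0..} f"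
    unfolding f_def by (intro set_integral_diff set_integrable_mult_right integrable)
  have f_integrable': "set_integrable lborel {0<..} f"
    by (rule set_integrable_subset[OF f_integrable]) auto
  have "(LBINT t=0..\<infinity>. f t) = 0 - 0"
  proof (rule interval_integral_FTC_integrable)
    show "(F has_vector_derivative f t) (at t)" for t
      using has_real_derivative_besselK_ode_primitive
      unfolding F_def f_def has_real_derivative_iff_has_vector_derivative .
    show "isCont f t" for t
      unfolding f_def besselK_integrand_def by (intro continuous_intros)
    show "set_integrable lborel (einterval 0 \<infinity>) f"
      using f_integrable' by (simp add: zero_ereal_def)
    have "(F \<longlongrightarrow> F 0) (at_right 0)"
      unfolding F_def by (intro tendsto_intros)
    then show "((F \<circ> real_of_ereal) \<longlongrightarrow> 0) (at_right 0)"
      unfolding zero_ereal_def ereal_tendsto_simps1 by (simp add: F_def)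
    show "((F \<circ> real_of_ereal) \<longlongrightarrow> 0) (at_left \<infinity>)"
      unfolding ereal_tendsto_simps1 F_def using besselK_ode_primitive_tendsto_0[OF s] .
  qed simp
  moreover have "(LBINT t=0..\<infinity>. f t) = (LBINT t:{0..}. f t)"
    unfolding interval_lebesgue_integral_0_infty
    by (rule set_integral_cong_set)
       (use f_integrable' f_integrable AE_lborel_singleton[of "0::real"]
        in \<open>auto simp: set_integrable_def set_borel_measurable_def less_le elim!: AE_mp\<close>)
  moreover have "(LBINT t:{0..}. f t) = s^2 * (besselK_moment \<nu> 2 s - besselK_moment \<nu> 0 s)
      - s * besselK_moment \<nu> 1 s - \<nu>^2 * besselK_moment \<nu> 0 s"
    unfolding f_def besselK_moment_def
    by (simp add: set_integral_diff set_integrable_mult_right integrable)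
  ultimately show ?thesis by simp
qed

section \<open>Laplacian of radial functions\<close>

lemma norm_add_scaleR_Basis:
  fixes x b :: "'a::euclidean_space"
  assumes "b \<in> Basis"
  shows "norm (x + t *\<^sub>R b) = sqrt (norm x ^ 2 + 2 * t * (x \<bullet> b) + t^2)"
proof -
  have "norm (x + t *\<^sub>R b) ^ 2 = (x + t *\<^sub>R b) \<bullet> (x + t *\<^sub>R b)"
    by (rule power2_norm_eq_inner)
  also have "\<dots> = x \<bullet> x + 2 * t * (x \<bullet> b) + t^2 * (b \<bullet> b)"
    by (simp add: inner_add_left inner_add_right inner_commute algebra_simps power2_eq_square)
  also have "\<dots> = norm x ^ 2 + 2 * t * (x \<bullet> b) + t^2"
    using assms by (simp add: power2_norm_eq_inner)
  finally show ?thesis by (metis norm_ge_zero real_sqrt_unique)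
qed

lemma has_real_derivative_norm_add_scaleR_Basis:
  fixes x b :: "'a::euclidean_space"
  assumes "b \<in> Basis" "x + t *\<^sub>R b \<noteq> 0"
  shows "((\<lambda>t. norm (x + t *\<^sub>R b)) has_real_derivative (x \<bullet> b + t) / norm (x + t *\<^sub>R b)) (at t)"
proof -
  define q where "q t = norm x ^ 2 + 2 * t * (x \<bullet> b) + t^2" for t
  have norm_eq: "norm (x + t *\<^sub>R b) = sqrt (q t)" for t
    using norm_add_scaleR_Basis[OF assms(1)] by (simp add: q_def)
  have "q t > 0" using assms(2) norm_eq[of t] by (metis zero_less_norm_iff real_sqrt_gt_0_iff)
  then have "((\<lambda>t. sqrt (q t)) has_real_derivative (x \<bullet> b + t) / sqrt (q t)) (at t)"
    unfolding q_def by (auto intro!: derivative_eq_intros simp: field_simps)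
  then show ?thesis unfolding norm_eq .
qed

lemma deriv_deriv_radial_along_Basis:
  fixes x b :: "'a::euclidean_space" and u u1 u2 :: "real \<Rightarrow> real"
  assumes x: "x \<noteq> 0" and b: "b \<in> Basis"
    and u1: "\<And>r. r > 0 \<Longrightarrow> (u has_real_derivative u1 r) (at r)"
    and u2: "\<And>r. r > 0 \<Longrightarrow> (u1 has_real_derivative u2 r) (at r)"
  shows "deriv (\<lambda>s. deriv (\<lambda>t. u (norm (x + t *\<^sub>R b))) s) 0
           = u2 (norm x) * (x \<bullet> b)^2 / norm x ^ 2 + u1 (norm x) * (1 / norm x - (x \<bullet> b)^2 / norm x ^ 3)"
proof -
  define r where "r = norm x"
  define p where "p = x \<bullet> b"
  have r: "r > 0" using x by (simp add: r_def)
  define \<psi> where "\<psi> t = u1 (norm (x + t *\<^sub>R b)) * ((p + t) / norm (x + t *\<^sub>R b))" for t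
  have nonzero: "x + t *\<^sub>R b \<noteq> 0" if "\<bar>t\<bar> < r" for t
  proof
    assume "x + t *\<^sub>R b = 0"
    then have "r = \<bar>t\<bar>" using b by (simp add: r_def eq_neg_iff_add_eq_0[symmetric])
    then show False using that by simp
  qed
  have deriv_eq: "deriv (\<lambda>t. u (norm (x + t *\<^sub>R b))) s = \<psi> s" if "s \<in> ball 0 r" for s
  proof (rule DERIV_imp_deriv)
    have "x + s *\<^sub>R b \<noteq> 0" using that by (intro nonzero) (simp add: dist_real_def)
    from DERIV_chain2[OF u1 has_real_derivative_norm_add_scaleR_Basis[OF b this]] this
    show "((\<lambda>t. u (norm (x + t *\<^sub>R b))) has_real_derivative \<psi> s) (at s)"
      unfolding \<psi>_def p_def by simp
  qed
  have d\<psi>: "(\<psi> has_real_derivative u2 r * (p / r) * (p / r) + (r - p * (p / r)) / (r * r) * u1 r) (at 0)"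
  proof -
    have norm0: "((\<lambda>t. norm (x + t *\<^sub>R b)) has_real_derivative p / r) (at 0)"
      using has_real_derivative_norm_add_scaleR_Basis[OF b, of x 0] x by (simp add: p_def r_def)
    have du1: "((\<lambda>t. u1 (norm (x + t *\<^sub>R b))) has_real_derivative u2 r * (p / r)) (at 0)"
      using DERIV_chain2[OF u2 norm0] r by (simp add: r_def)
    have quot: "((\<lambda>t. (p + t) / norm (x + t *\<^sub>R b)) has_real_derivative (r - p * (p / r)) / (r * r)) (at 0)"
      using DERIV_divide[OF DERIV_add[OF DERIV_const[of p] DERIV_ident] norm0] r by (simp add: r_def)
    show ?thesis
      unfolding \<psi>_def using DERIV_mult[OF du1 quot] by (simp add: r_def)
  qed
  have "((\<lambda>s. deriv (\<lambda>t. u (norm (x + t *\<^sub>R b))) s) has_real_derivative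
      u2 r * (p / r) * (p / r) + (r - p * (p / r)) / (r * r) * u1 r) (at 0)"
    by (rule has_field_derivative_transform_within_open[OF d\<psi>, of "ball 0 r"]) (use r deriv_eq in auto)
  moreover have "u2 r * (p / r) * (p / r) + (r - p * (p / r)) / (r * r) * u1 r
      = u2 r * p^2 / r^2 + u1 r * (1 / r - p^2 / r^3)"
    using r by (simp add: field_simps power2_eq_square power3_eq_cube)
  ultimately show ?thesis
    unfolding p_def r_def by (intro DERIV_imp_deriv) simp
qed

lemma laplacian_radial:
  fixes x :: "'a::euclidean_space" and u u1 u2 :: "real \<Rightarrow> real"
  assumes x: "x \<noteq> 0"
    and u1: "\<And>r. r > 0 \<Longrightarrow> (u has_real_derivative u1 r) (at r)"
    and u2: "\<And>r. r > 0 \<Longrightarrow> (u1 has_real_derivative u2 r) (at r)"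
  shows "laplacian (\<lambda>y. u (norm y)) x = u2 (norm x) + (real DIM('a) - 1) / norm x * u1 (norm x)"
proof -
  define r where "r = norm x"
  have r: "r > 0" using x by (simp add: r_def)
  have sum_sq: "(\<Sum>b\<in>Basis. (x \<bullet> b)^2) = r^2"
    unfolding r_def power2_norm_eq_inner euclidean_inner[of x x] by (simp add: power2_eq_square)
  have "laplacian (\<lambda>y. u (norm y)) x
      = (\<Sum>b\<in>Basis. u2 r * (x \<bullet> b)^2 / r^2 + u1 r * (1 / r - (x \<bullet> b)^2 / r^3))"
    unfolding laplacian_def r_def using deriv_deriv_radial_along_Basis[OF x _ u1 u2] by simp
  also have "\<dots> = u2 r / r^2 * (\<Sum>b\<in>Basis. (x \<bullet> b)^2)
                  + u1 r * (real DIM('a) / r - (\<Sum>b\<in>Basis. (x \<bullet> b)^2) / r^3)"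
    by (simp add: sum.distrib sum_distrib_left sum_subtractf sum_divide_distrib[symmetric] algebra_simps)
  also have "\<dots> = u2 r + (real DIM('a) - 1) / r * u1 r"
    unfolding sum_sq using r by (simp add: field_simps power2_eq_square power3_eq_cube)
  finally show ?thesis by (simp add: r_def)
qed

lemma laplacian_radial_mult:
  fixes x :: "'a::euclidean_space" and f f1 f2 g g1 g2 :: "real \<Rightarrow> real"
  assumes x: "x \<noteq> 0"
    and f1: "\<And>r. r > 0 \<Longrightarrow> (f has_real_derivative f1 r) (at r)"
    and f2: "\<And>r. r > 0 \<Longrightarrow> (f1 has_real_derivative f2 r) (at r)"
    and g1: "\<And>r. r > 0 \<Longrightarrow> (g has_real_derivative g1 r) (at r)"
    and g2: "\<And>r. r > 0 \<Longrightarrow> (g1 has_real_derivative g2 r) (at r)"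
  defines "r \<equiv> norm x" and "n \<equiv> real DIM('a)"
  shows "laplacian (\<lambda>y. f (norm y) * g (norm y)) x
           = f r * (g2 r + (n - 1) / r * g1 r) + 2 * f1 r * g1 r + g r * (f2 r + (n - 1) / r * f1 r)"
proof -
  have "laplacian (\<lambda>y. f (norm y) * g (norm y)) x
      = (f2 r * g r + 2 * f1 r * g1 r + f r * g2 r) + (n - 1) / r * (f1 r * g r + f r * g1 r)"
    unfolding r_def n_def
  proof (rule laplacian_radial[OF x, of "\<lambda>r. f r * g r"])
    show "((\<lambda>r. f r * g r) has_real_derivative f1 r * g r + f r * g1 r) (at r)" if "r > 0" for r
      using DERIV_mult[OF f1 g1, OF that that] by (simp add: mult.commute)
    show "((\<lambda>r. f1 r * g r + f r * g1 r) has_real_derivative f2 r * g r + 2 * f1 r * g1 r + f r * g2 r) (at r)"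
      if "r > 0" for r
      using DERIV_add[OF DERIV_mult[OF f2 g1] DERIV_mult[OF f1 g2], OF that that that that]
      by (simp add: algebra_simps)
  qed
  then show ?thesis by (simp add: algebra_simps)
qed

section \<open>The radial profile \<open>htilde\<close>\<close>

lemma small_powr_le:
  fixes \<gamma> M :: real
  assumes "\<gamma> > 0" "M > 0"
  obtains R where "0 < R" "R \<le> 1" "\<And>r. 0 < r \<Longrightarrow> r \<le> R \<Longrightarrow> r powr \<gamma> \<le> M"
proof
  show "0 < min 1 (M powr (1/\<gamma>))" "min 1 (M powr (1/\<gamma>)) \<le> 1" using assms by auto
  fix r :: real assume r: "0 < r" "r \<le> min 1 (M powr (1/\<gamma>))"
  then have "r powr \<gamma> \<le> (M powr (1/\<gamma>)) powr \<gamma>" using assms by (intro powr_mono2) auto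
  also have "\<dots> = M" using assms by (simp add: powr_powr)
  finally show "r powr \<gamma> \<le> M" .
qed

locale htilde_profile =
  fixes d :: nat and \<beta> \<kappa> :: real
  assumes \<beta>_pos: "\<beta> > 0" and \<kappa>_pos: "\<kappa> > 0"
begin

definition a :: real where "a = (real d - 2) / 2"
definition \<nu> :: real where "\<nu> = (real d - 2) / (2 * \<beta>)"
definition S :: "real \<Rightarrow> real" where "S r = sqrt \<kappa> / (\<beta> * r powr \<beta>)"
definition K :: "nat \<Rightarrow> real \<Rightarrow> real" where "K k r = besselK_moment \<nu> k (S r)"

definition htilde' :: "real \<Rightarrow> real" where
  "htilde' r = r powr (- a - 1) * (\<beta> * S r * K 1 r - a * K 0 r)"
definition htilde'' :: "real \<Rightarrow> real" where
  "htilde'' r = r powr (- a - 2) * (a * (a + 1) * K 0 r - (2 * a + 1 + \<beta>) * \<beta> * S r * K 1 r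
                                   + \<beta>^2 * S r ^ 2 * K 2 r)"

lemma a_eq: "a = \<beta> * \<nu>"
  using \<beta>_pos by (simp add: a_def \<nu>_def)

lemma S_pos: "r > 0 \<Longrightarrow> S r > 0"
  using \<beta>_pos \<kappa>_pos by (simp add: S_def)

lemma htilde_eq: "htilde d \<beta> \<kappa> r = r powr (- a) * K 0 r"
proof -
  have "- (real d - 2) / 2 = - a" unfolding a_def by linarith
  then show ?thesis by (simp add: htilde_def K_def besselK_moment_0 S_def \<nu>_def)
qed

lemma has_real_derivative_S: "r > 0 \<Longrightarrow> (S has_real_derivative - \<beta> * S r / r) (at r)"
proof -
  assume r: "r > 0"
  have S_eq: "S = (\<lambda>r. sqrt \<kappa> / \<beta> * r powr (- \<beta>))"
    by (rule ext) (simp add: S_def powr_minus divide_inverse)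
  show ?thesis
    unfolding S_eq using r \<beta>_pos
    by (auto intro!: derivative_eq_intros simp: powr_diff powr_minus field_simps)
qed

lemma has_real_derivative_K:
  assumes "r > 0"
  shows "(K k has_real_derivative \<beta> * S r / r * K (Suc k) r) (at r)"
  using DERIV_chain2[OF has_real_derivative_besselK_moment[OF S_pos[OF assms]] has_real_derivative_S[OF assms]]
  by (simp add: K_def[abs_def] mult_ac)

lemma has_real_derivative_htilde:
  "r > 0 \<Longrightarrow> (htilde d \<beta> \<kappa> has_real_derivative htilde' r) (at r)"
  unfolding htilde_eq[abs_def] htilde'_def
  by (rule derivative_eq_intros has_real_derivative_K refl | assumption)+
     (simp add: powr_diff field_simps)

lemma has_real_derivative_htilde':
  "r > 0 \<Longrightarrow> (htilde' has_real_derivative htilde'' r) (at r)"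
  unfolding htilde'_def[abs_def] htilde''_def
  by (rule derivative_eq_intros has_real_derivative_K has_real_derivative_S refl | assumption)+
     (simp add: powr_diff field_simps power2_eq_square numeral_2_eq_2)

lemma htilde_ode:
  assumes r: "r > 0"
  shows "htilde'' r + (real d - 1) / r * htilde' r = \<kappa> * r powr (-2 - 2*\<beta>) * htilde d \<beta> \<kappa> r"
proof -
  have bessel: "S r ^ 2 * (K 2 r - K 0 r) - S r * K 1 r - \<nu>^2 * K 0 r = 0"
    using besselK_moment_ode[OF S_pos[OF r]] by (simp add: K_def)
  have d: "real d - 1 = 2 * a + 1" by (simp add: a_def field_simps)
  have powr_shift: "r powr (- a - 1) = r * r powr (- a - 2)"
  proof -
    have "r powr (- a - 1) = r powr (1 + (- a - 2))" by (rule arg_cong[of _ _ "(powr) r"]) simp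
    also have "\<dots> = r powr 1 * r powr (- a - 2)" by (rule powr_add)
    finally show ?thesis using r by simp
  qed
  have "htilde'' r + (real d - 1) / r * htilde' r
      = r powr (- a - 2) * (- (a^2) * K 0 r - \<beta>^2 * S r * K 1 r + \<beta>^2 * S r ^ 2 * K 2 r)"
    unfolding htilde''_def htilde'_def d powr_shift using r by (simp add: field_simps power2_eq_square)
  also have "\<dots> = r powr (- a - 2) * (\<beta>^2 * S r ^ 2 * K 0 r)"
    using bessel unfolding a_eq by (simp add: algebra_simps power2_eq_square)
  also have "\<beta>^2 * S r ^ 2 = \<kappa> * r powr (- 2 * \<beta>)"
  proof -
    have "(r powr \<beta>)^2 = r powr (2 * \<beta>)"
      using r by (simp add: powr_realpow[symmetric] powr_powr mult.commute)
    then show ?thesis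
      using \<beta>_pos \<kappa>_pos r by (simp add: S_def power_divide power_mult_distrib powr_minus divide_simps)
  qed
  also have "r powr (- a - 2) * (\<kappa> * r powr (- 2 * \<beta>) * K 0 r)
      = \<kappa> * (r powr (- a - 2) * r powr (- 2 * \<beta>)) * K 0 r"
    by (simp only: mult_ac)
  also have "r powr (- a - 2) * r powr (- 2 * \<beta>) = r powr (-2 - 2*\<beta>) * r powr (- a)"
    unfolding powr_add[symmetric] by (simp add: algebra_simps)
  finally show ?thesis
    unfolding htilde_eq by (simp only: mult_ac)
qed

lemma htilde_nonneg: "r > 0 \<Longrightarrow> htilde d \<beta> \<kappa> r \<ge> 0"
  unfolding htilde_eq K_def by (simp add: besselK_moment_nonneg)

text \<open>Because \<open>K\<^sub>\<nu> \<le> -K\<^sub>\<nu>'\<close>, as \<open>cosh \<ge> 1\<close>.\<close>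
lemma htilde'_ge:
  assumes r: "r > 0"
  shows "(\<beta> * S r - a) / r * htilde d \<beta> \<kappa> r \<le> htilde' r"
proof -
  have "\<beta> * S r * K 0 r \<le> \<beta> * S r * K 1 r"
    using besselK_moment_mono[OF S_pos[OF r]] S_pos[OF r] \<beta>_pos
    by (intro mult_left_mono) (auto simp: K_def)
  then have "r powr (- a - 1) * ((\<beta> * S r - a) * K 0 r) \<le> htilde' r"
    unfolding htilde'_def by (intro mult_left_mono) (auto simp: algebra_simps)
  moreover have "(\<beta> * S r - a) / r * htilde d \<beta> \<kappa> r = r powr (- a - 1) * ((\<beta> * S r - a) * K 0 r)"
    unfolding htilde_eq using r by (simp add: powr_diff)
  ultimately show ?thesis by simp
qed

lemma htilde_le_mult_htilde:
  assumes "r > 0" "1 \<le> m" "m \<le> 2"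
  shows "htilde d \<beta> \<kappa> r \<le> m * htilde d \<beta> \<kappa> r" and "m * htilde d \<beta> \<kappa> r \<le> 2 * htilde d \<beta> \<kappa> r"
  using htilde_nonneg[OF assms(1)] assms(2,3) by (auto intro: mult_right_mono[of 1 m, simplified] mult_right_mono)

lemma laplacian_powr_mult_htilde:
  fixes x :: "'a::euclidean_space"
  assumes dim: "DIM('a) = d" and x: "x \<noteq> 0"
  defines "r \<equiv> norm x"
  shows "laplacian (\<lambda>y. (c + \<sigma> * norm y powr \<gamma>) * htilde d \<beta> \<kappa> (norm y)) x
           = (c + \<sigma> * r powr \<gamma>) * \<kappa> * r powr (-2 - 2*\<beta>) * htilde d \<beta> \<kappa> r
             + 2 * \<sigma> * \<gamma> * r powr \<gamma> / r * htilde' r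
             + \<sigma> * \<gamma> * (\<gamma> + 2 * a) * r powr \<gamma> / r^2 * htilde d \<beta> \<kappa> r"
proof -
  have r: "r > 0" using x by (simp add: r_def)
  have n: "real DIM('a) - 1 = 2 * a + 1" by (simp add: dim a_def field_simps)
  have f1: "((\<lambda>r. c + \<sigma> * r powr \<gamma>) has_real_derivative \<sigma> * \<gamma> * r powr \<gamma> / r) (at r)" if "r > 0" for r
    using that by (auto intro!: derivative_eq_intros simp: powr_diff)
  have f2: "((\<lambda>r. \<sigma> * \<gamma> * r powr \<gamma> / r) has_real_derivative \<sigma> * \<gamma> * (\<gamma> - 1) * r powr \<gamma> / r^2) (at r)"
    if "r > 0" for r
    using that by (auto intro!: derivative_eq_intros simp: powr_diff field_simps power2_eq_square)
  have "laplacian (\<lambda>y. (c + \<sigma> * norm y powr \<gamma>) * htilde d \<beta> \<kappa> (norm y)) x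
      = (c + \<sigma> * r powr \<gamma>) * (htilde'' r + (2 * a + 1) / r * htilde' r)
        + 2 * (\<sigma> * \<gamma> * r powr \<gamma> / r) * htilde' r
        + htilde d \<beta> \<kappa> r * (\<sigma> * \<gamma> * (\<gamma> - 1) * r powr \<gamma> / r^2 + (2 * a + 1) / r * (\<sigma> * \<gamma> * r powr \<gamma> / r))"
    using laplacian_radial_mult[OF x f1 f2 has_real_derivative_htilde has_real_derivative_htilde']
    unfolding n r_def by simp
  also have "htilde'' r + (2 * a + 1) / r * htilde' r = \<kappa> * r powr (-2 - 2*\<beta>) * htilde d \<beta> \<kappa> r"
    using htilde_ode[OF r] n unfolding dim by simp
  also have "(c + \<sigma> * r powr \<gamma>) * (\<kappa> * r powr (-2 - 2*\<beta>) * htilde d \<beta> \<kappa> r)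
        + 2 * (\<sigma> * \<gamma> * r powr \<gamma> / r) * htilde' r
        + htilde d \<beta> \<kappa> r * (\<sigma> * \<gamma> * (\<gamma> - 1) * r powr \<gamma> / r^2 + (2 * a + 1) / r * (\<sigma> * \<gamma> * r powr \<gamma> / r))
      = (c + \<sigma> * r powr \<gamma>) * \<kappa> * r powr (-2 - 2*\<beta>) * htilde d \<beta> \<kappa> r
        + 2 * \<sigma> * \<gamma> * r powr \<gamma> / r * htilde' r
        + \<sigma> * \<gamma> * (\<gamma> + 2 * a) * r powr \<gamma> / r^2 * htilde d \<beta> \<kappa> r"
    using r by (simp add: field_simps power2_eq_square)
  finally show ?thesis .
qed

text \<open>The lower bound \<open>htilde'_ge\<close> cancels the terms in \<open>a\<close>; the remaining gain
  \<open>\<gamma> \<beta> S r r\<^sup>\<gamma> / r\<^sup>2 \<cdot> htilde r\<close> absorbs the error \<open>E\<close>.\<close>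
lemma sign_laplacian_powr_mult_htilde:
  fixes x :: "'a::euclidean_space" and V :: "'a \<Rightarrow> real"
  assumes dim: "DIM('a) = d" and x: "x \<noteq> 0" and \<sigma>: "\<bar>\<sigma>\<bar> = 1" and \<gamma>: "\<gamma> > 0"
    and f: "0 \<le> c + \<sigma> * norm x powr \<gamma>" "c + \<sigma> * norm x powr \<gamma> \<le> 2"
    and V: "\<sigma> * (\<kappa> * norm x powr (-2 - 2*\<beta>) - V x) \<ge> - E"
    and E: "0 \<le> E" "E \<le> \<gamma> * \<beta> * S (norm x) * norm x powr \<gamma> / norm x ^ 2"
  shows "\<sigma> * (laplacian (\<lambda>y. (c + \<sigma> * norm y powr \<gamma>) * htilde d \<beta> \<kappa> (norm y)) x
                - V x * ((c + \<sigma> * norm x powr \<gamma>) * htilde d \<beta> \<kappa> (norm x))) \<ge> 0"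
proof -
  define r where "r = norm x"
  define h where "h = htilde d \<beta> \<kappa> r"
  define \<rho> where "\<rho> = r powr \<gamma>"
  define f where "f = c + \<sigma> * \<rho>"
  have r: "r > 0" using x by (simp add: r_def)
  have h: "h \<ge> 0" using htilde_nonneg[OF r] by (simp add: h_def)
  have \<rho>: "\<rho> > 0" using r by (simp add: \<rho>_def)
  have "\<sigma> * (laplacian (\<lambda>y. (c + \<sigma> * norm y powr \<gamma>) * htilde d \<beta> \<kappa> (norm y)) x - V x * (f * h))
      = f * h * (\<sigma> * (\<kappa> * r powr (-2 - 2*\<beta>) - V x)) + 2 * \<gamma> * \<rho> / r * htilde' r
        + \<gamma> * (\<gamma> + 2 * a) * \<rho> / r^2 * h"
    unfolding laplacian_powr_mult_htilde[OF dim x] r_def[symmetric] h_def[symmetric] \<rho>_def[symmetric]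
      f_def using \<sigma> by (simp add: algebra_simps abs_if split: if_splits)
  also have "\<dots> \<ge> - 2 * E * h + 2 * \<gamma> * \<rho> / r * ((\<beta> * S r - a) / r * h) + \<gamma> * (\<gamma> + 2 * a) * \<rho> / r^2 * h"
  proof -
    have "f * h * (\<sigma> * (\<kappa> * r powr (-2 - 2*\<beta>) - V x)) \<ge> f * h * (- E)"
      using V f h by (intro mult_left_mono) (auto simp: r_def f_def \<rho>_def)
    moreover have "f * h * (- E) \<ge> - 2 * E * h"
    proof -
      have "f * h \<le> 2 * h" using f h by (intro mult_right_mono) (auto simp: f_def \<rho>_def r_def)
      then have "E * (f * h) \<le> E * (2 * h)" using E by (intro mult_left_mono) auto
      then show ?thesis by (simp add: algebra_simps)
    qed
    moreover have "2 * \<gamma> * \<rho> / r * htilde' r \<ge> 2 * \<gamma> * \<rho> / r * ((\<beta> * S r - a) / r * h)"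
      using htilde'_ge[OF r] \<gamma> \<rho> r by (intro mult_left_mono) (auto simp: h_def)
    ultimately show ?thesis by linarith
  qed
  also have "- 2 * E * h + 2 * \<gamma> * \<rho> / r * ((\<beta> * S r - a) / r * h) + \<gamma> * (\<gamma> + 2 * a) * \<rho> / r^2 * h
      = 2 * (\<gamma> * \<beta> * S r * \<rho> / r^2 - E) * h + \<gamma>^2 * \<rho> / r^2 * h"
    using r by (simp add: field_simps power2_eq_square)
  also have "\<dots> \<ge> 0"
    using E h \<rho> by (simp add: r_def \<rho>_def)
  finally show ?thesis by (simp add: f_def \<rho>_def h_def r_def)
qed

lemma perturbation_le_gain:
  assumes r: "r > 0" and \<beta>: "\<beta> = \<beta>' + 2 * \<gamma>" and C: "C * r powr \<gamma> \<le> \<gamma> * sqrt \<kappa>"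
  shows "C * r powr (-2 - \<beta>') \<le> \<gamma> * \<beta> * S r * r powr \<gamma> / r^2"
proof -
  define D where "D = r powr \<gamma> * r^2 * r powr \<beta>'"
  have D: "D > 0" using r by (simp add: D_def)
  have "r powr (-2 - \<beta>') = 1 / (r^2 * r powr \<beta>')"
    using r by (simp add: powr_diff powr_minus divide_simps flip: powr_add)
  then have "C * r powr (-2 - \<beta>') = C * r powr \<gamma> / D"
    using r by (simp add: D_def)
  also have "\<dots> \<le> \<gamma> * sqrt \<kappa> / D"
    using C D by (simp add: divide_right_mono)
  also have "\<dots> = \<gamma> * \<beta> * S r * r powr \<gamma> / r^2"
  proof -
    have "r powr \<beta> = r powr (\<beta>' + \<gamma> + \<gamma>)"
      using \<beta> by (intro arg_cong[of _ _ "(powr) r"]) linarith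
    also have "\<dots> = r powr \<beta>' * r powr \<gamma> * r powr \<gamma>"
      by (simp only: powr_add)
    finally show ?thesis
      using r \<beta>_pos by (simp add: S_def D_def field_simps power2_eq_square)
  qed
  finally show ?thesis .
qed

lemma sign_laplacian_powr_mult_htilde_near_0:
  fixes V :: "'a::euclidean_space \<Rightarrow> real"
  assumes dim: "DIM('a) = d" and \<sigma>: "\<bar>\<sigma>\<bar> = 1" and \<beta>': "0 < \<beta>'" "\<beta>' < \<beta>" and C: "C > 0"
    and V: "\<And>x. 0 < norm x \<Longrightarrow> norm x \<le> 1 \<Longrightarrow>
              \<sigma> * (\<kappa> * norm x powr (-2 - 2*\<beta>) - V x) \<ge> - C * norm x powr (-2 - \<beta>')"
    and f: "\<And>r. 0 < r \<Longrightarrow> r \<le> 1 \<Longrightarrow>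
              0 \<le> c + \<sigma> * r powr ((\<beta> - \<beta>') / 2) \<and> c + \<sigma> * r powr ((\<beta> - \<beta>') / 2) \<le> 2"
  defines "u \<equiv> \<lambda>r. (c + \<sigma> * r powr ((\<beta> - \<beta>') / 2)) * htilde d \<beta> \<kappa> r"
  shows "\<exists>R. 0 < R \<and> R \<le> 1 \<and>
           (\<forall>x::'a. x \<noteq> 0 \<and> norm x \<le> R \<longrightarrow> \<sigma> * (laplacian (\<lambda>y. u (norm y)) x - V x * u (norm x)) \<ge> 0)"
proof -
  define \<gamma> where "\<gamma> = (\<beta> - \<beta>') / 2"
  have \<gamma>: "\<gamma> > 0" "\<beta> = \<beta>' + 2 * \<gamma>" using \<beta>' unfolding \<gamma>_def by argo+
  obtain R where R: "0 < R" "R \<le> 1" "\<And>r. 0 < r \<Longrightarrow> r \<le> R \<Longrightarrow> r powr \<gamma> \<le> \<gamma> * sqrt \<kappa> / C"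
    using small_powr_le[of \<gamma> "\<gamma> * sqrt \<kappa> / C"] \<gamma> C \<kappa>_pos by auto
  have "\<sigma> * (laplacian (\<lambda>y. u (norm y)) x - V x * u (norm x)) \<ge> 0" if x: "x \<noteq> 0" "norm x \<le> R" for x :: 'a
  proof -
    have "C * norm x powr \<gamma> \<le> \<gamma> * sqrt \<kappa>"
      using R(3)[of "norm x"] x C by (simp add: field_simps)
    then have "C * norm x powr (-2 - \<beta>') \<le> \<gamma> * \<beta> * S (norm x) * norm x powr \<gamma> / norm x ^ 2"
      using x by (intro perturbation_le_gain[OF _ \<gamma>(2)]) auto
    then show ?thesis
      unfolding u_def \<gamma>_def[symmetric]
      using x R f[of "norm x"] V[of x] C
      by (intro sign_laplacian_powr_mult_htilde[OF dim x(1) \<sigma> \<gamma>(1), where E = "C * norm x powr (-2 - \<beta>')"])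
         (auto simp: \<gamma>_def)
  qed
  then show ?thesis using R by blast
qed

end

theorem lemma3p5:
  fixes V :: "'a::euclidean_space \<Rightarrow> real" and \<beta> \<kappa> :: real
  assumes "\<beta> > 0" and "\<kappa> > 0" and "admissible_potential V"
  shows
   "(\<forall>\<beta>' C\<^sub>1. 0 < \<beta>' \<and> \<beta>' < \<beta> \<and> C\<^sub>1 > 0 \<and>
       (\<forall>x. 0 < norm x \<and> norm x \<le> 1 \<longrightarrow>
          V x \<ge> \<kappa> * norm x powr (-2 - 2*\<beta>) - C\<^sub>1 * norm x powr (-2 - \<beta>'))
     \<longrightarrow>
       (let u\<^sub>1 = (\<lambda>r. (2 - r powr ((\<beta> - \<beta>') / 2)) * htilde DIM('a) \<beta> \<kappa> r) in
         (\<forall>x::'a. x \<noteq> 0 \<and> norm x \<le> 1 \<longrightarrow>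
            htilde DIM('a) \<beta> \<kappa> (norm x) \<le> u\<^sub>1 (norm x) \<and>
            u\<^sub>1 (norm x) \<le> 2 * htilde DIM('a) \<beta> \<kappa> (norm x)) \<and>
         (\<exists>R\<^sub>1. 0 < R\<^sub>1 \<and> R\<^sub>1 \<le> 1 \<and>
            (\<forall>x. x \<noteq> 0 \<and> norm x \<le> R\<^sub>1 \<longrightarrow>
               laplacian (\<lambda>y. u\<^sub>1 (norm y)) x - V x * u\<^sub>1 (norm x) \<le> 0))))
    \<and>
    (\<forall>\<beta>' C\<^sub>2. 0 < \<beta>' \<and> \<beta>' < \<beta> \<and> C\<^sub>2 > 0 \<and>
       (\<forall>x. 0 < norm x \<and> norm x \<le> 1 \<longrightarrow>
          V x \<le> \<kappa> * norm x powr (-2 - 2*\<beta>) + C\<^sub>2 * norm x powr (-2 - \<beta>'))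
     \<longrightarrow>
       (let u\<^sub>2 = (\<lambda>r. (1 + r powr ((\<beta> - \<beta>') / 2)) * htilde DIM('a) \<beta> \<kappa> r) in
         (\<forall>x::'a. x \<noteq> 0 \<and> norm x \<le> 1 \<longrightarrow>
            htilde DIM('a) \<beta> \<kappa> (norm x) \<le> u\<^sub>2 (norm x) \<and>
            u\<^sub>2 (norm x) \<le> 2 * htilde DIM('a) \<beta> \<kappa> (norm x)) \<and>
         (\<exists>R\<^sub>2. 0 < R\<^sub>2 \<and> R\<^sub>2 \<le> 1 \<and>
            (\<forall>x. x \<noteq> 0 \<and> norm x \<le> R\<^sub>2 \<longrightarrow>
               laplacian (\<lambda>y. u\<^sub>2 (norm y)) x - V x * u\<^sub>2 (norm x) \<ge> 0))))"
proof -
  interpret htilde_profile "DIM('a)" \<beta> \<kappa> using assms(1,2) by unfold_locales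
  have powr_01: "0 \<le> r powr ((\<beta> - \<beta>') / 2) \<and> r powr ((\<beta> - \<beta>') / 2) \<le> 1"
    if "0 < r" "r \<le> 1" "\<beta>' < \<beta>" for r \<beta>' using that by (auto intro: powr_le1)
  show ?thesis
  proof (intro conjI allI impI, goal_cases)
    case (1 \<beta>' C\<^sub>1)
    then have \<beta>': "0 < \<beta>'" "\<beta>' < \<beta>" "C\<^sub>1 > 0" by auto
    have V: "-1 * (\<kappa> * norm x powr (-2 - 2*\<beta>) - V x) \<ge> - C\<^sub>1 * norm x powr (-2 - \<beta>')"
      if "0 < norm x" "norm x \<le> 1" for x using 1 that by auto
    have f: "0 \<le> 2 + -1 * r powr ((\<beta> - \<beta>') / 2) \<and> 2 + -1 * r powr ((\<beta> - \<beta>') / 2) \<le> 2"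
      if "0 < r" "r \<le> 1" for r using powr_01[OF that \<beta>'(2)] by auto
    show ?case
      using sign_laplacian_powr_mult_htilde_near_0[OF refl _ \<beta>' V f] powr_01 \<beta>'(2)
      by (auto simp: Let_def intro!: htilde_le_mult_htilde)
  next
    case (2 \<beta>' C\<^sub>2)
    then have \<beta>': "0 < \<beta>'" "\<beta>' < \<beta>" "C\<^sub>2 > 0" by auto
    have V: "1 * (\<kappa> * norm x powr (-2 - 2*\<beta>) - V x) \<ge> - C\<^sub>2 * norm x powr (-2 - \<beta>')"
      if "0 < norm x" "norm x \<le> 1" for x using 2 that by auto
    have f: "0 \<le> 1 + 1 * r powr ((\<beta> - \<beta>') / 2) \<and> 1 + 1 * r powr ((\<beta> - \<beta>') / 2) \<le> 2"
      if "0 < r" "r \<le> 1" for r using powr_01[OF that \<beta>'(2)] by auto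
    show ?case
      using sign_laplacian_powr_mult_htilde_near_0[OF refl _ \<beta>' V f] powr_01 \<beta>'(2)
      by (auto simp: Let_def intro!: htilde_le_mult_htilde)
  qed
qed

end
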